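(* Let $n \in \mathbb{Z}_{>0}$ and $m \in \mathbb{Z}_{\geq 0}$, and let $f$ be the bijection described in the context. Then \[ f\left(\bigsqcup_{\mu \leq (2m)^n} \mathrm{SSYT}(\mu,n)\right) = \left\{ ((T,\lambda),t) \in \bigsqcup_{\lambda \leq (2m)^n \colon \text{even} } \mathrm{SSYT}(\lambda,n) \times \{0,1\}^n \;\middle|\; t^{-1}(1) \subseteq S(T) \right\}, \] where the right-hand side is in bijection with $\displaystyle \bigsqcup_{(T,\lambda) \in \bigsqcup_{\lambda \leq (2m)^n \colon \text{even} } \mathrm{SSYT}(\lambda,n)} \{0,1\}^{S(T)}$.
   Context: Let $n \in \mathbb{Z}_{>0}$ and $m \in \mathbb{Z}_{\geq 0}$. For a partition $\lambda$ with at most $n$ parts, $\mathrm{SSYT}(\lambda,n)$ denotes the set of semi-standard Young tableaux of shape $\lambda$ with entries in $\{1,2,\ldots,n\}$, using the convention that entries are weakly decreasing along rows and strictly decreasing down columns. For partitions $\lambda,\mu$ with $n$ parts, $\lambda \leq \mu$ means $\lambda_i \leq \mu_i$ for all $i$; $(k)^n=(k,k,\ldots,k)$; a partition is even if all its parts are even. Row insertion $T \leftarrow x$ (for a tableau $T$ and positive integer $x$): starting from the first row, insert $x$ into the row by replacing (bumping) the leftmost entry $y$ strictly less than $x$, then insert $y$ into the next row in the same manner; if no such entry exists in a row, place $x$ at the end of that row and stop. Fact used: if $U$ is a tableau of shape $\mu$ and $\lambda \leq \mu$ with $\mu\setminus\lambda$ having at most one box in each row, $p=\#(\mu\setminus\lambda)$,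 then there exist a unique tableau $T$ of shape $\lambda$ and integers $x_1<x_2<\cdots<x_p$ with $U = (((T \leftarrow x_1) \leftarrow x_2) \leftarrow \cdots) \leftarrow x_p$ (obtained by repeatedly applying reverse row insertion to the boxes of $\mu\setminus\lambda$ from bottom to top). The bijection $f \colon \bigsqcup_{\mu \leq (2m+1)^n} \mathrm{SSYT}(\mu,n) \to \bigsqcup_{\lambda \leq (2m)^n \colon \text{even}} \mathrm{SSYT}(\lambda,n) \times \{0,1\}^n$ is defined as follows: for $(U,\mu)$, let $\lambda$ be the even partition with $\lambda_i \in \{\mu_i,\mu_i-1\}$; take the unique $T \in \mathrm{SSYT}(\lambda,n)$ and $x_1<\cdots<x_p \leq n$ with $U = (((T \leftarrow x_1) \leftarrow x_2) \leftarrow \cdots) \leftarrow x_p$; define $t(i)=1$ if $i \in \{x_1,\ldots,x_p\}$ and $t(i)=0$ otherwise; set $f((U,\mu)) = ((T,\lambda),t)$. Its inverse sends $((T,\lambda),t)$ to $(U,\mathrm{shape}(U))$ with $U = (((T \leftarrow x_1) \leftarrow \cdots) \leftarrow x_p)$, $\{x_1<\cdots<x_p\}=t^{-1}(1)$. For $T \in \mathrm{SSYT}(\lambda,n)$ with $\lambda \leq (2m)^n$ even, $S(T) := \{T_{1,2m}+1, T_{1,2m}+2, \ldots, n\}$, where $T_{1,2m}:=0$ if $\lambda_1 < 2m$. (Equivalently, $S(T)=\{1\le j\le n \mid \pi'_{1,j}\ne 2m\}$ where $\pi'$ is the even symmetric plane partition (shifted staircase plane partition of size $n$ with entries $\le 2m$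 and even diagonal entries) whose row-wise conjugate is $T$.) *)

theory Defs
  imports "HOL-Library.FuncSet"
begin

text \<open>A partition with (at most) n parts is a list of length n of
  weakly decreasing naturals (zeros allowed). A tableau is a list of rows (row i is
  the list of entries in row i+1, read left to right); its shape is the list of row
  lengths. Entries are in 1..n, weakly decreasing along rows and strictly
  decreasing down columns.\<close>

definition is_partition :: "nat \<Rightarrow> nat list \<Rightarrow> bool" where
  "is_partition n lam \<longleftrightarrow> length lam = n \<and>
     (\<forall>i. Suc i < n \<longrightarrow> lam ! Suc i \<le> lam ! i)"

definition bounded_by :: "nat list \<Rightarrow> nat \<Rightarrow> bool" where
  "bounded_by lam k \<longleftrightarrow> (\<forall>i < length lam. lam ! i \<le> k)"

definition even_partition :: "nat list \<Rightarrow> bool" where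
  "even_partition lam \<longleftrightarrow> (\<forall>i < length lam. even (lam ! i))"

definition SSYT :: "nat list \<Rightarrow> nat \<Rightarrow> nat list list set" where
  "SSYT lam n = {T. length T = length lam
     \<and> (\<forall>i < length T. length (T ! i) = lam ! i)
     \<and> (\<forall>i < length T. \<forall>j < length (T ! i). 1 \<le> T ! i ! j \<and> T ! i ! j \<le> n)
     \<and> (\<forall>i < length T. \<forall>j. Suc j < length (T ! i) \<longrightarrow> T ! i ! Suc j \<le> T ! i ! j)
     \<and> (\<forall>i. Suc i < length T \<longrightarrow> (\<forall>j < length (T ! Suc i).
            j < length (T ! i) \<and> T ! Suc i ! j < T ! i ! j))}"

fun row_insert :: "nat list \<Rightarrow> nat \<Rightarrow> nat list \<times> nat option" where
  "row_insert [] x = ([x], None)"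
| "row_insert (y # ys) x =
     (if y < x then (x # ys, Some y)
      else (let (r, b) = row_insert ys x in (y # r, b)))"

fun tab_insert :: "nat list list \<Rightarrow> nat \<Rightarrow> nat list list" where
  "tab_insert [] x = [[x]]"
| "tab_insert (r # rs) x =
     (case row_insert r x of
        (r', None) \<Rightarrow> r' # rs
      | (r', Some y) \<Rightarrow> r' # tab_insert rs y)"

definition insert_all :: "nat list list \<Rightarrow> nat list \<Rightarrow> nat list list" where
  "insert_all T xs = foldl tab_insert T xs"

definition even_part_of :: "nat list \<Rightarrow> nat list" where
  "even_part_of mu = map (\<lambda>k. 2 * (k div 2)) mu"

definition ones :: "nat \<Rightarrow> (nat \<Rightarrow> nat) \<Rightarrow> nat set" where
  "ones n t = {i \<in> {1..n}. t i = 1}"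

definition f_map :: "nat \<Rightarrow> nat list list \<times> nat list \<Rightarrow> (nat list list \<times> nat list) \<times> (nat \<Rightarrow> nat)" where
  "f_map n Umu = (THE r. case r of ((T, lam), t) \<Rightarrow>
       lam = even_part_of (snd Umu) \<and> T \<in> SSYT lam n \<and> t \<in> {1..n} \<rightarrow>\<^sub>E {0, 1}
       \<and> fst Umu = insert_all T (sorted_list_of_set (ones n t)))"

text \<open>S(T) = {T_{1,2m}+1, ..., n}, with T_{1,2m} := 0 if lambda_1 < 2m.
  For m = 0 (lambda_1 = 0 = 2m) we use T_{1,0} := n, so S(T) is empty, matching
  the equivalent description S(T) = {j | pi'_{1,j} \<noteq> 2m}.\<close>
definition S_set :: "nat \<Rightarrow> nat \<Rightarrow> nat list list \<Rightarrow> nat set" where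
  "S_set n m T =
     (if m = 0 then {}
      else if length (T ! 0) < 2 * m then {1..n}
      else {T ! 0 ! (2 * m - 1) + 1 .. n})"

definition LHS_dom :: "nat \<Rightarrow> nat \<Rightarrow> (nat list list \<times> nat list) set" where
  "LHS_dom n m = {(U, mu). is_partition n mu \<and> bounded_by mu (2 * m) \<and> U \<in> SSYT mu n}"

definition even_tabs :: "nat \<Rightarrow> nat \<Rightarrow> (nat list list \<times> nat list) set" where
  "even_tabs n m = {(T, lam). is_partition n lam \<and> bounded_by lam (2 * m)
       \<and> even_partition lam \<and> T \<in> SSYT lam n}"

end

theory Submission
  imports Defs
begin

(* Inserting x\<^sub>1 < ... < x\<^sub>p into T adds one box in each of p strictly increasing rows
   (row bumping lemma).  These rows are exactly the rows in which shape U exceeds shape T, so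
   reverse insertion at them recovers T and the x\<^sub>i from U: this makes f well defined, and
   reverse insertion from the lowest odd row of U upwards produces the decomposition.  In
   particular the first row gains at most one box, namely the box of x\<^sub>1.  If T has even
   shape inside (2m)\<^sup>n, a first row shorter than 2m has length at most 2m - 2 and may gain a
   box, while a first row of length 2m gains one iff x\<^sub>1 \<le> T\<^sub>1\<^sub>,\<^sub>2\<^sub>m.  As a partition is
   bounded by its first part, shape U \<le> (2m)\<^sup>n iff every x\<^sub>i lies in S(T).  The bijection
   with the second set restricts t to S(T). *)

section \<open>Row insertion into a weakly decreasing row\<close>

lemma sorted_ge_nth_antimono:
  "sorted_wrt (\<ge>) r \<Longrightarrow> i \<le> j \<Longrightarrow> j < length r \<Longrightarrow> r ! j \<le> (r ! i :: 'a :: order)"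
  by (cases "i = j") (auto simp: sorted_wrt_iff_nth_less)

lemma sorted_ge_iff_nth_Suc:
  "sorted_wrt (\<ge>) r \<longleftrightarrow> (\<forall>j. Suc j < length r \<longrightarrow> r ! Suc j \<le> (r ! j :: 'a :: order))"
  by (simp add: sorted_wrt_iff_nth_Suc_transp transp_on_def)

definition bump_pos :: "nat list \<Rightarrow> nat \<Rightarrow> nat" where
  "bump_pos r x = length (takeWhile (\<lambda>z. x \<le> z) r)"

lemma row_insert_eq:
  "row_insert r x = (if bump_pos r x < length r then (r[bump_pos r x := x], Some (r ! bump_pos r x))
                     else (r @ [x], None))"
  by (induction r) (auto simp: bump_pos_def split: prod.splits)

lemma bump_pos_le_length: "bump_pos r x \<le> length r"
  by (simp add: bump_pos_def length_takeWhile_le)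

lemma le_nth_before_bump_pos: "p < bump_pos r x \<Longrightarrow> x \<le> r ! p"
  unfolding bump_pos_def by (metis nth_mem set_takeWhileD takeWhile_nth)

lemma nth_bump_pos_less: "bump_pos r x < length r \<Longrightarrow> r ! bump_pos r x < x"
  unfolding bump_pos_def using nth_length_takeWhile not_le by metis

lemma nth_less_from_bump_pos:
  "sorted_wrt (\<ge>) r \<Longrightarrow> bump_pos r x \<le> p \<Longrightarrow> p < length r \<Longrightarrow> r ! p < x"
  using nth_bump_pos_less sorted_ge_nth_antimono by (metis le_less_trans le_trans bump_pos_le_length)

lemma bump_pos_eqI: "k < length r \<Longrightarrow> (\<forall>p<k. x \<le> r ! p) \<Longrightarrow> r ! k < x \<Longrightarrow> bump_pos r x = k"
  unfolding bump_pos_def by (subst takeWhile_eq_take_P_nth[where n = k]) auto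

lemma bump_pos_eq_length: "(\<forall>z \<in> set r. x \<le> z) \<Longrightarrow> bump_pos r x = length r"
  by (simp add: bump_pos_def takeWhile_eq_all_conv[THEN iffD2])

lemma sorted_row_insert:
  assumes sorted: "sorted_wrt (\<ge>) r"
  shows "sorted_wrt (\<ge>) (fst (row_insert r x))"
proof (cases "bump_pos r x < length r")
  case True
  let ?k = "bump_pos r x"
  have "r[?k := x] ! Suc j \<le> r[?k := x] ! j" if j: "Suc j < length r" for j
    using j le_nth_before_bump_pos[of j r x] nth_bump_pos_less[OF True]
      sorted[unfolded sorted_ge_iff_nth_Suc, rule_format, of j]
    by (cases "Suc j = ?k"; cases "j = ?k") auto
  then show ?thesis using True by (simp add: row_insert_eq sorted_ge_iff_nth_Suc)
next
  case False
  then have "\<forall>z \<in> set r. x \<le> z"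
    using le_nth_before_bump_pos bump_pos_le_length[of r x] by (auto simp: in_set_conv_nth)
  then show ?thesis using False sorted by (simp add: row_insert_eq sorted_wrt_append)
qed

section \<open>Tableaux and row insertion\<close>

definition dominates :: "nat list \<Rightarrow> nat list \<Rightarrow> bool" where
  "dominates r b \<longleftrightarrow> length b \<le> length r \<and> (\<forall>j < length b. b ! j < r ! j)"

definition is_tableau :: "nat list list \<Rightarrow> bool" where
  "is_tableau T \<longleftrightarrow> (\<forall>r \<in> set T. sorted_wrt (\<ge>) r) \<and> successively dominates T"

definition first_row :: "nat list list \<Rightarrow> nat list" where
  "first_row T = (case T of [] \<Rightarrow> [] | r # _ \<Rightarrow> r)"

lemma first_row_simps [simp]: "first_row [] = []" "first_row (r # rs) = r"
  by (simp_all add: first_row_def)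

lemma is_tableau_Cons:
  "is_tableau (r # rs) \<longleftrightarrow> sorted_wrt (\<ge>) r \<and> is_tableau rs \<and> dominates r (first_row rs)"
  by (cases rs) (auto simp: is_tableau_def dominates_def)

lemma dominates_snoc: "dominates r b \<Longrightarrow> dominates (r @ [x]) b"
  unfolding dominates_def by (auto simp: nth_append)

text \<open>The bumped entry lands in the next row no further right than the position it was
  bumped from, hence strictly below an entry of the new row.\<close>
lemma dominates_bump:
  assumes sorted: "sorted_wrt (\<ge>) r" and dom: "dominates r b" and k: "bump_pos r x < length r"
  shows "dominates (r[bump_pos r x := x]) (fst (row_insert b (r ! bump_pos r x)))"
proof -
  let ?k = "bump_pos r x" and ?y = "r ! bump_pos r x"
  let ?k' = "bump_pos b ?y"
  let ?r' = "r[?k := x]" and ?b' = "fst (row_insert b ?y)"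
  have yx: "?y < x" using nth_bump_pos_less k by blast
  have k'k: "?k' \<le> ?k"
  proof (cases "?k < length b")
    case True
    then have "b ! ?k < ?y" using dom unfolding dominates_def by blast
    then show ?thesis using le_nth_before_bump_pos[of ?k b ?y] by (meson not_le)
  qed (use bump_pos_le_length[of b ?y] in linarith)
  have new: "?y < ?r' ! ?k'"
    using k yx k'k le_nth_before_bump_pos[of ?k' r x] by (cases "?k' = ?k") auto
  have old: "b ! p < ?r' ! p" if "p < length b" "p \<noteq> ?k'" for p
  proof -
    have "b ! p < r ! p" using dom that unfolding dominates_def by simp
    also have "\<dots> \<le> ?r' ! p" using yx k by (cases "p = ?k") auto
    finally show ?thesis .
  qed
  have len: "length ?b' \<le> length ?r'"
    using dom k k'k bump_pos_le_length[of b ?y] by (auto simp: row_insert_eq dominates_def)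
  have "?b' ! p < ?r' ! p" if p: "p < length ?b'" for p
    using p new old bump_pos_le_length[of b ?y]
    by (cases "p = ?k'") (auto simp: row_insert_eq nth_append split: if_splits)
  then show ?thesis using len by (simp add: dominates_def)
qed

definition tableau_on :: "nat \<Rightarrow> nat list list \<Rightarrow> bool" where
  "tableau_on n T \<longleftrightarrow> is_tableau T \<and> length T = n \<and> set (concat T) \<subseteq> {1..n}"

lemma dominates_iff_nth: "dominates r b \<longleftrightarrow> (\<forall>j < length b. j < length r \<and> b ! j < r ! j)"
proof
  assume nth: "\<forall>j < length b. j < length r \<and> b ! j < r ! j"
  then have "length b \<le> length r" using nth[rule_format, of "length r"] by linarith
  then show "dominates r b" using nth by (simp add: dominates_def)
qed (auto simp: dominates_def)

lemma SSYT_iff_tableau_on: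
  assumes "length lam = n"
  shows "T \<in> SSYT lam n \<longleftrightarrow> tableau_on n T \<and> map length T = lam"
proof -
  have "set (concat T) \<subseteq> {1..n} \<longleftrightarrow>
      (\<forall>i < length T. \<forall>j < length (T ! i). 1 \<le> T ! i ! j \<and> T ! i ! j \<le> n)"
    by (simp add: UN_subset_iff subset_eq all_set_conv_all_nth)
  moreover have "(\<forall>r \<in> set T. sorted_wrt (\<ge>) r) \<longleftrightarrow>
      (\<forall>i < length T. \<forall>j. Suc j < length (T ! i) \<longrightarrow> T ! i ! Suc j \<le> T ! i ! j)"
    by (simp add: all_set_conv_all_nth sorted_ge_iff_nth_Suc)
  ultimately show ?thesis
    using assms
    by (auto simp: SSYT_def tableau_on_def is_tableau_def successively_conv_nth dominates_iff_nth
        list_eq_iff_nth_eq)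
qed

lemma is_partition_shape:
  assumes "tableau_on n U"
  shows "is_partition n (map length U)"
proof -
  have "length (U ! Suc i) \<le> length (U ! i)" if "Suc i < length U" for i
    using successively_nth[of dominates U i] that assms
    by (simp add: tableau_on_def is_tableau_def dominates_def)
  then show ?thesis using assms by (simp add: is_partition_def tableau_on_def)
qed

text \<open>Rows are numbered from \<open>0\<close>; the value \<open>length T\<close> means that \<open>T \<leftarrow> x\<close> starts a
  new row.\<close>
fun new_box_row :: "nat list list \<Rightarrow> nat \<Rightarrow> nat" where
  "new_box_row [] x = 0"
| "new_box_row (r # rs) x =
     (case row_insert r x of (_, None) \<Rightarrow> 0 | (_, Some y) \<Rightarrow> Suc (new_box_row rs y))"

lemma tab_insert_Cons_eq:
  "tab_insert (r # rs) x =
     (if bump_pos r x < length r then r[bump_pos r x := x] # tab_insert rs (r ! bump_pos r x)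
      else (r @ [x]) # rs)"
  by (simp add: row_insert_eq)

lemma new_box_row_Cons_eq:
  "new_box_row (r # rs) x =
     (if bump_pos r x < length r then Suc (new_box_row rs (r ! bump_pos r x)) else 0)"
  by (simp add: row_insert_eq)

declare tab_insert.simps(2) [simp del] new_box_row.simps(2) [simp del]

lemma first_row_tab_insert: "first_row (tab_insert T y) = fst (row_insert (first_row T) y)"
  by (cases T) (auto simp: tab_insert_Cons_eq row_insert_eq)

lemma is_tableau_tab_insert: "is_tableau T \<Longrightarrow> is_tableau (tab_insert T x)"
proof (induction T arbitrary: x)
  case Nil
  then show ?case by (simp add: is_tableau_Cons dominates_def)
next
  case (Cons r rs)
  then have sorted: "sorted_wrt (\<ge>) r" and rs: "is_tableau rs" and dom: "dominates r (first_row rs)"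
    by (auto simp: is_tableau_Cons)
  have row: "sorted_wrt (\<ge>) (fst (row_insert r x))" using sorted_row_insert[OF sorted] .
  show ?case
  proof (cases "bump_pos r x < length r")
    case True
    then show ?thesis
      using row Cons.IH[OF rs] dominates_bump[OF sorted dom True]
      by (simp add: tab_insert_Cons_eq is_tableau_Cons first_row_tab_insert row_insert_eq)
  next
    case False
    then show ?thesis using row rs dominates_snoc[OF dom]
      by (simp add: tab_insert_Cons_eq is_tableau_Cons row_insert_eq)
  qed
qed

lemma length_tab_insert:
  "length (tab_insert T x) = (if new_box_row T x < length T then length T else Suc (length T))"
  by (induction T arbitrary: x) (auto simp: tab_insert_Cons_eq new_box_row_Cons_eq)

lemma length_tab_insert_nth:
  "i < length T \<Longrightarrow>
     length (tab_insert T x ! i) = (if i = new_box_row T x then Suc (length (T ! i)) else length (T ! i))"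
  by (induction T arbitrary: x i)
     (auto simp: tab_insert_Cons_eq new_box_row_Cons_eq nth_Cons split: nat.split)

lemma set_concat_tab_insert: "set (concat (tab_insert T x)) \<subseteq> insert x (set (concat T))"
proof (induction T arbitrary: x)
  case (Cons r rs)
  have "set (r[bump_pos r x := x]) \<subseteq> insert x (set r)" by (rule set_update_subset_insert)
  then show ?case using Cons[of "r ! bump_pos r x"] by (auto simp: tab_insert_Cons_eq)
qed simp

text \<open>An entry \<open>x\<close> bumped along rows whose entries are positive decreases strictly at each
  bump, so it comes to rest within the first \<open>x\<close> rows.\<close>
lemma new_box_row_less:
  "\<forall>e \<in> set (concat T). 1 \<le> e \<Longrightarrow> 1 \<le> x \<Longrightarrow> x \<le> length T \<Longrightarrow> new_box_row T x < length T"
proof (induction T arbitrary: x)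
  case (Cons r rs)
  let ?y = "r ! bump_pos r x"
  show ?case
  proof (cases "bump_pos r x < length r")
    case True
    then have "1 \<le> ?y" "?y < x" using Cons.prems nth_bump_pos_less[of r x] by auto
    then show ?thesis using True Cons.IH[of ?y] Cons.prems by (auto simp: new_box_row_Cons_eq)
  qed (simp add: new_box_row_Cons_eq)
qed simp

lemma tableau_on_tab_insert:
  assumes T: "tableau_on n T" and x: "x \<in> {1..n}"
  shows "tableau_on n (tab_insert T x)" and "new_box_row T x < n"
proof -
  have lt: "new_box_row T x < length T"
    using T x by (intro new_box_row_less) (auto simp: tableau_on_def)
  then show "new_box_row T x < n" using T by (simp add: tableau_on_def)
  have "set (concat (tab_insert T x)) \<subseteq> {1..n}"
    using T x set_concat_tab_insert[of T x] unfolding tableau_on_def by blast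
  then show "tableau_on n (tab_insert T x)"
    using T lt is_tableau_tab_insert[of T x] length_tab_insert[of T x]
    unfolding tableau_on_def by auto
qed

section \<open>Row bumping\<close>

lemma new_box_row_tab_insert_less:
  assumes "\<forall>r \<in> set T. sorted_wrt (\<ge>) r" and "x < y"
  shows "new_box_row T x < new_box_row (tab_insert T x) y"
  using assms
proof (induction T arbitrary: x y)
  case Nil
  then show ?case by (simp add: new_box_row_Cons_eq bump_pos_def)
next
  case (Cons r rs)
  let ?k = "bump_pos r x"
  show ?case
  proof (cases "?k < length r")
    case False
    have "bump_pos (r @ [x]) y \<le> length r"
    proof (rule ccontr)
      assume "\<not> bump_pos (r @ [x]) y \<le> length r"
      then have "y \<le> (r @ [x]) ! length r" using le_nth_before_bump_pos by (metis not_le)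
      then show False using Cons.prems by simp
    qed
    then show ?thesis using False by (simp add: tab_insert_Cons_eq new_box_row_Cons_eq)
  next
    case True
    let ?b = "r ! ?k" and ?r' = "r[?k := x]"
    let ?k2 = "bump_pos ?r' y"
    have "?r' ! ?k < y" using True Cons.prems by simp
    then have k2: "?k2 \<le> ?k" using le_nth_before_bump_pos[of ?k ?r' y] by (meson not_le)
    have "?b < x" using nth_bump_pos_less[OF True] .
    then have "?b < ?r' ! ?k2"
      using k2 True le_nth_before_bump_pos[of ?k2 r x] by (cases "?k2 = ?k") auto
    then have "new_box_row rs ?b < new_box_row (tab_insert rs ?b) (?r' ! ?k2)"
      using Cons by simp
    then show ?thesis using True k2 by (simp add: tab_insert_Cons_eq new_box_row_Cons_eq)
  qed
qed

lemma new_box_row_tab_insert_le: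
  assumes "\<forall>r \<in> set T. sorted_wrt (\<ge>) r" and "y \<le> x"
  shows "new_box_row (tab_insert T x) y \<le> new_box_row T x"
  using assms
proof (induction T arbitrary: x y)
  case Nil
  then show ?case by (simp add: new_box_row_Cons_eq bump_pos_def)
next
  case (Cons r rs)
  have sorted: "sorted_wrt (\<ge>) r" using Cons.prems by simp
  let ?k = "bump_pos r x"
  show ?case
  proof (cases "?k < length r")
    case False
    then have "\<forall>z \<in> set r. x \<le> z"
      using le_nth_before_bump_pos bump_pos_le_length[of r x] by (auto simp: in_set_conv_nth)
    then have "bump_pos (r @ [x]) y = length (r @ [x])"
      using Cons.prems by (intro bump_pos_eq_length) auto
    then show ?thesis using False by (simp add: tab_insert_Cons_eq new_box_row_Cons_eq)
  next
    case True
    let ?b = "r ! ?k" and ?r' = "r[?k := x]"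
    let ?k2 = "bump_pos ?r' y"
    have k2: "?k < ?k2"
    proof (rule ccontr)
      assume "\<not> ?k < ?k2"
      then have "?r' ! ?k2 < y" and "x \<le> ?r' ! ?k2"
        using nth_bump_pos_less[of ?r' y] le_nth_before_bump_pos[of ?k2 r x] True
        by (auto simp: nth_list_update)
      then show False using Cons.prems by simp
    qed
    show ?thesis
    proof (cases "?k2 < length ?r'")
      case k2_less: True
      have "?r' ! ?k2 = r ! ?k2" using k2 by simp
      also have "\<dots> \<le> ?b" using sorted_ge_nth_antimono[OF sorted, of ?k ?k2] k2 k2_less by simp
      finally have "new_box_row (tab_insert rs ?b) (?r' ! ?k2) \<le> new_box_row rs ?b"
        using Cons by simp
      then show ?thesis using True k2_less by (simp add: tab_insert_Cons_eq new_box_row_Cons_eq)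
    qed (simp add: True tab_insert_Cons_eq new_box_row_Cons_eq)
  qed
qed

section \<open>Reverse row insertion\<close>

text \<open>After the bump, the positions holding entries larger than the bumped entry are exactly
  those up to the bump position; so the bump position, and hence the original row and the
  inserted entry, can be read off the new row and the bumped entry.\<close>
lemma bumped_less_iff_le_bump_pos:
  assumes sorted: "sorted_wrt (\<ge>) r" and k: "bump_pos r x < length r" and p: "p < length r"
  shows "r ! bump_pos r x < r[bump_pos r x := x] ! p \<longleftrightarrow> p \<le> bump_pos r x"
proof -
  let ?k = "bump_pos r x"
  have yx: "r ! ?k < x" using nth_bump_pos_less[OF k] .
  consider "p < ?k" | "p = ?k" | "?k < p" by linarith
  then show ?thesis
  proof cases
    case 1
    then show ?thesis using le_nth_before_bump_pos[of p r x] yx by simp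
  next
    case 2
    then show ?thesis using k yx by simp
  next
    case 3
    then show ?thesis using sorted_ge_nth_antimono[OF sorted, of ?k p] p by simp
  qed
qed

lemma row_insert_bump_inj:
  assumes sorted: "sorted_wrt (\<ge>) r" "sorted_wrt (\<ge>) r'"
    and k: "bump_pos r x < length r" "bump_pos r' x' < length r'"
    and row: "r[bump_pos r x := x] = r'[bump_pos r' x' := x']"
    and bumped: "r ! bump_pos r x = r' ! bump_pos r' x'"
  shows "r = r' \<and> x = x'"
proof -
  let ?k = "bump_pos r x" and ?k' = "bump_pos r' x'"
  have len: "length r = length r'" using row by (metis length_list_update)
  have "?k = ?k'"
  proof (rule ccontr)
    assume "?k \<noteq> ?k'"
    then consider "?k < ?k'" | "?k' < ?k" by linarith
    then show False
      by cases (use bumped_less_iff_le_bump_pos[OF sorted(1) k(1)]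
          bumped_less_iff_le_bump_pos[OF sorted(2) k(2)] row bumped k len in fastforce)+
  qed
  then have "x = x'" using row k by (metis nth_list_update_eq)
  moreover have "r = r'" using row bumped \<open>?k = ?k'\<close> by (metis list_update_id list_update_overwrite)
  ultimately show ?thesis by simp
qed

lemma tab_insert_inj:
  assumes "\<forall>r \<in> set T. sorted_wrt (\<ge>) r" "\<forall>r \<in> set T'. sorted_wrt (\<ge>) r"
    and "length T = length T'" "tab_insert T x = tab_insert T' x'"
    and "new_box_row T x = new_box_row T' x'"
  shows "T = T' \<and> x = x'"
  using assms
proof (induction T arbitrary: T' x x')
  case Nil
  then show ?case by simp
next
  case (Cons r rs)
  obtain r' rs' where T': "T' = r' # rs'" using Cons.prems(3) by (cases T') auto
  show ?case
  proof (cases "bump_pos r x < length r")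
    case True
    have k': "bump_pos r' x' < length r'"
      using Cons.prems(5) True T' by (auto simp: new_box_row_Cons_eq split: if_splits)
    have "rs = rs' \<and> r ! bump_pos r x = r' ! bump_pos r' x'"
      using Cons.prems True k' T'
      by (intro Cons.IH[of rs']) (simp_all add: tab_insert_Cons_eq new_box_row_Cons_eq)
    moreover have "r = r' \<and> x = x'"
      using row_insert_bump_inj[of r r' x x'] Cons.prems True k' T' calculation
      by (simp add: tab_insert_Cons_eq)
    ultimately show ?thesis using T' by simp
  next
    case False
    have "\<not> bump_pos r' x' < length r'"
      using Cons.prems(5) False T' by (auto simp: new_box_row_Cons_eq split: if_splits)
    then show ?thesis using Cons.prems(4) False T' by (simp add: tab_insert_Cons_eq)
  qed
qed

lemma row_insert_nth_bump_pos:
  "bump_pos b y < length (fst (row_insert b y)) \<and> fst (row_insert b y) ! bump_pos b y = y"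
  using bump_pos_le_length[of b y] by (auto simp: row_insert_eq nth_append)

lemma last_pos_greater:
  fixes r :: "'a :: linorder list"
  assumes "j < length r" "y < r ! j"
  obtains k where "j \<le> k" "k < length r" "y < r ! k"
    "\<forall>p. k < p \<longrightarrow> p < length r \<longrightarrow> r ! p \<le> y"
proof -
  define k where "k = Max {p. p < length r \<and> y < r ! p}"
  have fin: "finite {p. p < length r \<and> y < r ! p}" by simp
  have "k \<in> {p. p < length r \<and> y < r ! p}"
    unfolding k_def using assms by (intro Max_in fin) auto
  moreover have "j \<le> k" unfolding k_def using assms by (intro Max_ge fin) simp
  moreover have "r ! p \<le> y" if "k < p" "p < length r" for p
  proof (rule ccontr)
    assume "\<not> r ! p \<le> y"
    then have "p \<in> {p. p < length r \<and> y < r ! p}" using that(2) by simp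
    then have "p \<le> k" unfolding k_def by (intro Max_ge fin)
    then show False using that(1) by simp
  qed
  ultimately show ?thesis using that by blast
qed

lemma row_unbump:
  assumes sorted: "sorted_wrt (\<ge>) r" and k: "k < length r" "y < r ! k"
    and after: "\<forall>p. k < p \<longrightarrow> p < length r \<longrightarrow> r ! p \<le> y"
  shows "sorted_wrt (\<ge>) (r[k := y])" and "bump_pos (r[k := y]) (r ! k) = k"
proof -
  have "r[k := y] ! Suc q \<le> r[k := y] ! q" if q: "Suc q < length r" for q
    using q k after sorted_ge_nth_antimono[OF sorted, of q "Suc q"]
      sorted_ge_nth_antimono[OF sorted, of q k]
    by (cases "q = k"; cases "Suc q = k") auto
  then show "sorted_wrt (\<ge>) (r[k := y])" by (simp add: sorted_ge_iff_nth_Suc)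
  show "bump_pos (r[k := y]) (r ! k) = k"
    using k sorted_ge_nth_antimono[OF sorted] by (intro bump_pos_eqI) auto
qed

lemma dominates_unbump:
  assumes sorted: "sorted_wrt (\<ge>) b" and dom: "dominates r (fst (row_insert b y))"
    and k: "k < length r" and after: "\<forall>p. k < p \<longrightarrow> p < length r \<longrightarrow> r ! p \<le> y"
  shows "dominates (r[k := y]) b"
proof -
  let ?j = "bump_pos b y" and ?b' = "fst (row_insert b y)"
  have j: "?j < length ?b'" "?b' ! ?j = y" using row_insert_nth_bump_pos by blast+
  then have "y < r ! ?j" using dom unfolding dominates_def by metis
  moreover have "?j < length r" using j(1) dom unfolding dominates_def by linarith
  ultimately have jk: "?j \<le> k" using after by (metis leD not_le)
  have lb: "length b \<le> length ?b'" by (simp add: row_insert_eq)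
  have "b ! p < r[k := y] ! p" if p: "p < length b" for p
  proof (cases "p = k")
    case True
    then show ?thesis using nth_less_from_bump_pos[OF sorted jk] p k by simp
  next
    case False
    have "b ! p < r ! p"
    proof (cases "p = ?j")
      case True
      then show ?thesis using nth_less_from_bump_pos[OF sorted, of y p] p \<open>y < r ! ?j\<close> by simp
    next
      case False
      then have "b ! p = ?b' ! p" using p by (auto simp: row_insert_eq nth_append)
      then show ?thesis using dom p lb unfolding dominates_def by simp
    qed
    then show ?thesis using False by simp
  qed
  then show ?thesis using dom lb unfolding dominates_def by simp
qed

lemma exists_unbump:
  assumes sorted: "sorted_wrt (\<ge>) r" and dom: "dominates r (first_row (tab_insert Vs y))"
    and Vs: "is_tableau Vs" "Vs \<noteq> []"
  obtains k where "k < length r" "is_tableau (r[k := y] # Vs)"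
    "tab_insert (r[k := y] # Vs) (r ! k) = r # tab_insert Vs y"
    "new_box_row (r[k := y] # Vs) (r ! k) = Suc (new_box_row Vs y)"
proof -
  let ?b = "first_row Vs"
  have sorted_b: "sorted_wrt (\<ge>) ?b" using Vs by (cases Vs) (auto simp: is_tableau_Cons)
  have first: "first_row (tab_insert Vs y) = fst (row_insert ?b y)" by (rule first_row_tab_insert)
  have "bump_pos ?b y < length r" "y < r ! bump_pos ?b y"
    using dom row_insert_nth_bump_pos[of ?b y] unfolding first dominates_def
    by (metis order_less_le_trans)+
  then obtain k where k: "k < length r" "y < r ! k"
    and after: "\<forall>p. k < p \<longrightarrow> p < length r \<longrightarrow> r ! p \<le> y"
    by (rule last_pos_greater)
  note unbump = row_unbump[OF sorted k after]
  have "is_tableau (r[k := y] # Vs)"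
    using unbump(1) Vs dominates_unbump[OF sorted_b dom[unfolded first] k(1) after]
    by (simp add: is_tableau_Cons)
  moreover have "tab_insert (r[k := y] # Vs) (r ! k) = r # tab_insert Vs y"
    and "new_box_row (r[k := y] # Vs) (r ! k) = Suc (new_box_row Vs y)"
    using unbump(2) k by (simp_all add: tab_insert_Cons_eq new_box_row_Cons_eq)
  ultimately show ?thesis using that k(1) by blast
qed

lemma exists_tab_insert_at_corner:
  assumes "is_tableau U" "i < length U" "U ! i \<noteq> []"
    "Suc i < length U \<longrightarrow> length (U ! Suc i) < length (U ! i)"
  shows "\<exists>V x. is_tableau V \<and> tab_insert V x = U \<and> length V = length U \<and> new_box_row V x = i
           \<and> set (concat V) \<subseteq> set (concat U) \<and> x \<in> set (concat U)"
  using assms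
proof (induction U arbitrary: i)
  case Nil
  then show ?case by simp
next
  case (Cons r Us)
  have sorted: "sorted_wrt (\<ge>) r" and Us: "is_tableau Us" and dom: "dominates r (first_row Us)"
    using Cons.prems(1) by (auto simp: is_tableau_Cons)
  show ?case
  proof (cases i)
    case 0
    have "r \<noteq> []" using Cons.prems(3) 0 by simp
    then have r: "r = butlast r @ [last r]" by simp
    have sorted': "sorted_wrt (\<ge>) (butlast r)" and last: "\<forall>z \<in> set (butlast r). last r \<le> z"
      using sorted by (subst (asm) r; simp add: sorted_wrt_append)+
    have "length (first_row Us) < length r"
      using Cons.prems(4) 0 \<open>r \<noteq> []\<close> by (cases Us) auto
    then have "dominates (butlast r) (first_row Us)"
      using dom unfolding dominates_def by (auto simp: nth_butlast)
    then have "is_tableau (butlast r # Us)" using sorted' Us by (simp add: is_tableau_Cons)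
    moreover have "tab_insert (butlast r # Us) (last r) = r # Us"
      and "new_box_row (butlast r # Us) (last r) = 0"
      using bump_pos_eq_length[OF last] r by (simp_all add: tab_insert_Cons_eq new_box_row_Cons_eq)
    moreover have "set (concat (butlast r # Us)) \<subseteq> set (concat (r # Us))"
      by (auto dest: in_set_butlastD)
    ultimately show ?thesis using 0 \<open>r \<noteq> []\<close> by (intro exI[of _ "butlast r # Us"] exI[of _ "last r"]) auto
  next
    case (Suc i')
    have "i' < length Us" "Us ! i' \<noteq> []" "Suc i' < length Us \<longrightarrow> length (Us ! Suc i') < length (Us ! i')"
      using Cons.prems(2-4) Suc by auto
    then obtain Vs y where Vs: "is_tableau Vs" and ins: "tab_insert Vs y = Us" and len: "length Vs = length Us"
      and row: "new_box_row Vs y = i'" and set_Vs: "set (concat Vs) \<subseteq> set (concat Us)"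
      and y: "y \<in> set (concat Us)"
      using Cons.IH[OF Us] by blast
    have "Vs \<noteq> []" using len Cons.prems(2) Suc by auto
    then obtain k where k: "k < length r" "is_tableau (r[k := y] # Vs)"
      "tab_insert (r[k := y] # Vs) (r ! k) = r # tab_insert Vs y"
      "new_box_row (r[k := y] # Vs) (r ! k) = Suc (new_box_row Vs y)"
      by (rule exists_unbump[OF sorted dom[folded ins] Vs])
    moreover have "set (concat (r[k := y] # Vs)) \<subseteq> set (concat (r # Us))"
      using set_update_subset_insert[of r k y] set_Vs y by auto
    ultimately show ?thesis using len ins row Suc
      by (intro exI[of _ "r[k := y] # Vs"] exI[of _ "r ! k"]) auto
  qed
qed

section \<open>Inserting increasing sequences\<close>

lemma insert_all_Nil [simp]: "insert_all T [] = T"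
  and insert_all_Cons: "insert_all T (x # xs) = insert_all (tab_insert T x) xs"
  and insert_all_snoc: "insert_all T (xs @ [x]) = tab_insert (insert_all T xs) x"
  by (simp_all add: insert_all_def)

lemma tableau_on_insert_all: "tableau_on n T \<Longrightarrow> set xs \<subseteq> {1..n} \<Longrightarrow> tableau_on n (insert_all T xs)"
  by (induction xs arbitrary: T) (auto simp: insert_all_Cons tableau_on_tab_insert)

fun new_box_rows :: "nat list list \<Rightarrow> nat list \<Rightarrow> nat list" where
  "new_box_rows T [] = []"
| "new_box_rows T (x # xs) = new_box_row T x # new_box_rows (tab_insert T x) xs"

lemma new_box_rows_snoc:
  "new_box_rows T (xs @ [x]) = new_box_rows T xs @ [new_box_row (insert_all T xs) x]"
  by (induction xs arbitrary: T) (simp_all add: insert_all_Cons)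

lemma length_new_box_rows [simp]: "length (new_box_rows T xs) = length xs"
  by (induction xs arbitrary: T) simp_all

lemma new_box_rows_less:
  "tableau_on n T \<Longrightarrow> set xs \<subseteq> {1..n} \<Longrightarrow> set (new_box_rows T xs) \<subseteq> {..<n}"
  by (induction xs arbitrary: T) (auto simp: tableau_on_tab_insert)

lemma length_insert_all_nth_count:
  "tableau_on n T \<Longrightarrow> set xs \<subseteq> {1..n} \<Longrightarrow> i < n \<Longrightarrow>
     length (insert_all T xs ! i) = length (T ! i) + count_list (new_box_rows T xs) i"
proof (induction xs arbitrary: T)
  case (Cons x xs)
  then have "tableau_on n (tab_insert T x)" "new_box_row T x < n"
    using tableau_on_tab_insert by auto
  moreover have "i < length T" using Cons.prems by (simp add: tableau_on_def)
  ultimately show ?case using Cons by (simp add: insert_all_Cons length_tab_insert_nth)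
qed simp

lemma sorted_new_box_rows:
  "is_tableau T \<Longrightarrow> sorted_wrt (<) xs \<Longrightarrow> sorted_wrt (<) (new_box_rows T xs)"
proof (induction xs arbitrary: T rule: induct_list012)
  case (3 x y xs)
  have "new_box_row T x < new_box_row (tab_insert T x) y"
    using 3 by (intro new_box_row_tab_insert_less) (auto simp: is_tableau_def)
  then show ?case
    using "3.IH"(2)[of "tab_insert T x"] "3.prems" is_tableau_tab_insert
    by simp (meson less_trans)
qed simp_all

lemma count_list_distinct: "distinct xs \<Longrightarrow> count_list xs x = (if x \<in> set xs then 1 else 0)"
  by (induction xs) auto

lemma length_insert_all_nth:
  assumes "tableau_on n T" "sorted_wrt (<) xs" "set xs \<subseteq> {1..n}" "i < n"
  shows "length (insert_all T xs ! i) = length (T ! i) + (if i \<in> set (new_box_rows T xs) then 1 else 0)"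
proof -
  have "distinct (new_box_rows T xs)"
    using sorted_new_box_rows assms(1,2) by (simp add: tableau_on_def strict_sorted_iff)
  then show ?thesis using length_insert_all_nth_count[OF assms(1,3,4)] by (simp add: count_list_distinct)
qed

text \<open>For increasing sequences the new rows are the rows in which the shape grows, so they
  are determined by the two shapes.\<close>
lemma new_box_rows_unique:
  assumes T: "tableau_on n T" and T': "tableau_on n T'" and shape: "map length T = map length T'"
    and xs: "sorted_wrt (<) xs" "set xs \<subseteq> {1..n}" and xs': "sorted_wrt (<) xs'" "set xs' \<subseteq> {1..n}"
    and U: "insert_all T xs = insert_all T' xs'"
  shows "new_box_rows T xs = new_box_rows T' xs'"
proof (rule strict_sorted_equal)
  show "sorted_wrt (<) (new_box_rows T xs)" "sorted_wrt (<) (new_box_rows T' xs')"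
    using sorted_new_box_rows T T' xs(1) xs'(1) by (auto simp: tableau_on_def)
  have "length (T ! i) = length (T' ! i)" if "i < n" for i
    using shape that T by (metis length_map nth_map tableau_on_def)
  then have "i \<in> set (new_box_rows T xs) \<longleftrightarrow> i \<in> set (new_box_rows T' xs')" if "i < n" for i
    using length_insert_all_nth[OF T xs that] length_insert_all_nth[OF T' xs' that] U that
    by (auto split: if_splits)
  then show "set (new_box_rows T xs) = set (new_box_rows T' xs')"
    using new_box_rows_less[OF T xs(2)] new_box_rows_less[OF T' xs'(2)] by blast
qed

lemma insert_all_inj:
  assumes "tableau_on n T" "tableau_on n T'" "set xs \<subseteq> {1..n}" "set xs' \<subseteq> {1..n}"
    and "new_box_rows T xs = new_box_rows T' xs'" "insert_all T xs = insert_all T' xs'"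
  shows "T = T' \<and> xs = xs'"
  using assms
proof (induction xs arbitrary: xs' rule: rev_induct)
  case Nil
  then have "xs' = []" by (metis length_0_conv length_new_box_rows list.size(3))
  then show ?case using Nil by simp
next
  case (snoc x xs)
  have "length xs' = Suc (length xs)" using snoc.prems(5) length_new_box_rows by (metis length_append_singleton)
  then obtain ys' x' where xs': "xs' = ys' @ [x']" by (cases xs' rule: rev_exhaust) auto
  let ?W = "insert_all T xs" and ?W' = "insert_all T' ys'"
  have W: "tableau_on n ?W" and W': "tableau_on n ?W'"
    using tableau_on_insert_all snoc.prems(1-4) xs' by auto
  have rows: "new_box_rows T xs = new_box_rows T' ys'" "new_box_row ?W x = new_box_row ?W' x'"
    using snoc.prems(5) xs' by (simp_all add: new_box_rows_snoc)
  have "?W = ?W' \<and> x = x'"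
    using W W' rows(2) snoc.prems(6) xs'
    by (intro tab_insert_inj) (auto simp: insert_all_snoc tableau_on_def is_tableau_def)
  then show ?case using snoc.IH[of ys'] snoc.prems(1-4) rows(1) xs' by auto
qed

lemma insert_all_unique:
  assumes "tableau_on n T" "tableau_on n T'" "map length T = map length T'"
    "sorted_wrt (<) xs" "set xs \<subseteq> {1..n}" "sorted_wrt (<) xs'" "set xs' \<subseteq> {1..n}"
    "insert_all T xs = insert_all T' xs'"
  shows "T = T' \<and> xs = xs'"
  using insert_all_inj new_box_rows_unique assms by metis

section \<open>Decomposition over the even part of the shape\<close>

definition odd_rows :: "nat list list \<Rightarrow> nat set" where
  "odd_rows U = {i. i < length U \<and> odd (length (U ! i))}"

lemma uninsert_last_odd_row:
  assumes U: "tableau_on n U" and i: "i = Max (odd_rows U)" and odd: "odd_rows U \<noteq> {}"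
  obtains V x where "tableau_on n V" "x \<in> {1..n}" "tab_insert V x = U" "new_box_row V x = i"
    "odd_rows V = odd_rows U - {i}" "even_part_of (map length V) = even_part_of (map length U)"
proof -
  have fin: "finite (odd_rows U)" by (simp add: odd_rows_def)
  have "i \<in> odd_rows U" using Max_in[OF fin odd] i by simp
  then have i_less: "i < length U" and i_odd: "odd (length (U ! i))" by (auto simp: odd_rows_def)
  have corner: "length (U ! Suc i) < length (U ! i)" if "Suc i < length U"
  proof -
    have "dominates (U ! i) (U ! Suc i)"
      using U that by (simp add: tableau_on_def is_tableau_def successively_conv_nth)
    moreover have "Suc i \<notin> odd_rows U" using Max_ge[OF fin, of "Suc i"] i by auto
    ultimately show ?thesis
      using that i_odd by (auto simp: dominates_def odd_rows_def le_less)
  qed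
  have "U ! i \<noteq> []" using i_odd by auto
  then obtain V x where V: "is_tableau V" and ins: "tab_insert V x = U" and len: "length V = length U"
    and row: "new_box_row V x = i" and entries: "set (concat V) \<subseteq> set (concat U)"
    and x: "x \<in> set (concat U)"
    using exists_tab_insert_at_corner[of U i] U i_less corner by (auto simp: tableau_on_def)
  have lengths: "length (U ! j) = (if j = i then Suc (length (V ! j)) else length (V ! j))"
    if "j < length U" for j
    using length_tab_insert_nth[of j V x] that ins row len by simp
  have "odd_rows V = odd_rows U - {i}"
    using lengths lengths[OF i_less] i_odd len by (auto simp: odd_rows_def split: if_splits)
  moreover have "even_part_of (map length V) = even_part_of (map length U)"
    using lengths i_odd len by (intro nth_equalityI) (auto simp: even_part_of_def)
  moreover have "tableau_on n V" "x \<in> {1..n}" using U V len entries x by (auto simp: tableau_on_def)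
  ultimately show ?thesis using that ins row by blast
qed

lemma last_new_box_row_odd:
  assumes T: "tableau_on n T" and even: "\<forall>r \<in> set T. even (length r)"
    and ys: "sorted_wrt (<) (zs @ [y])" "set (zs @ [y]) \<subseteq> {1..n}"
  shows "new_box_row (insert_all T zs) y \<in> odd_rows (insert_all T (zs @ [y]))"
proof -
  let ?r = "new_box_row (insert_all T zs) y"
  have r: "?r \<in> set (new_box_rows T (zs @ [y]))" by (simp add: new_box_rows_snoc)
  then have "?r < n" using new_box_rows_less[OF T ys(2)] by auto
  moreover have "even (length (T ! ?r))" using even \<open>?r < n\<close> T by (simp add: tableau_on_def)
  ultimately show ?thesis
    using length_insert_all_nth[OF T ys \<open>?r < n\<close>] r tableau_on_insert_all[OF T ys(2)]
    by (simp add: odd_rows_def tableau_on_def)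
qed

lemma even_length_if_even_part:
  assumes "map length T = even_part_of mu" "r \<in> set T"
  shows "even (length r)"
proof -
  have "length r \<in> set (map length T)" using assms(2) by simp
  then show ?thesis using assms(1) by (auto simp: even_part_of_def)
qed

lemma inserted_less_if_new_box_below_odd_rows:
  assumes T: "tableau_on n T" and even: "\<forall>r \<in> set T. even (length r)"
    and ys: "sorted_wrt (<) ys" "set ys \<subseteq> {1..n}"
    and below: "\<forall>j \<in> odd_rows (insert_all T ys). j < new_box_row (insert_all T ys) x"
    and y: "y \<in> set ys"
  shows "y < x"
proof (rule ccontr)
  assume "\<not> y < x"
  obtain zs y0 where ys_eq: "ys = zs @ [y0]" using y by (metis empty_iff list.set(1) rev_exhaust)
  have "y \<le> y0" using y ys(1) ys_eq by (auto simp: sorted_wrt_append)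
  let ?Z = "insert_all T zs"
  have "tableau_on n ?Z" using tableau_on_insert_all[OF T] ys(2) ys_eq by simp
  then have "new_box_row (tab_insert ?Z y0) x \<le> new_box_row ?Z y0"
    using \<open>\<not> y < x\<close> \<open>y \<le> y0\<close>
    by (intro new_box_row_tab_insert_le) (auto simp: tableau_on_def is_tableau_def)
  moreover have "new_box_row ?Z y0 \<in> odd_rows (insert_all T ys)"
    using last_new_box_row_odd[OF T even, of zs y0] ys ys_eq by simp
  ultimately show False using below ys_eq by (fastforce simp: insert_all_snoc)
qed

text \<open>Removing boxes from the lowest odd row upwards by reverse insertion extracts the
  entries in decreasing order, since by the bumping lemma a larger entry could only have
  been inserted into a row at least as high.\<close>
lemma exists_even_decomposition:
  "tableau_on n U \<Longrightarrow>
     \<exists>T xs. tableau_on n T \<and> map length T = even_part_of (map length U)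
       \<and> sorted_wrt (<) xs \<and> set xs \<subseteq> {1..n} \<and> insert_all T xs = U"
proof (induction "card (odd_rows U)" arbitrary: U)
  case 0
  then have "odd_rows U = {}" by (simp add: odd_rows_def)
  then have "even_part_of (map length U) = map length U"
    by (intro nth_equalityI) (auto simp: even_part_of_def odd_rows_def)
  then show ?case using 0 by (intro exI[of _ U] exI[of _ "[]"]) simp
next
  case (Suc k)
  define i where "i = Max (odd_rows U)"
  have fin: "finite (odd_rows U)" by (simp add: odd_rows_def)
  have odd: "odd_rows U \<noteq> {}" using Suc.hyps(2) by auto
  obtain V x where V: "tableau_on n V" and x: "x \<in> {1..n}" and ins: "tab_insert V x = U"
    and row: "new_box_row V x = i" and odd_V: "odd_rows V = odd_rows U - {i}"
    and shape: "even_part_of (map length V) = even_part_of (map length U)"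
    by (rule uninsert_last_odd_row[OF Suc.prems i_def odd])
  have "i \<in> odd_rows U" using Max_in[OF fin odd] i_def by simp
  then have "k = card (odd_rows V)" using odd_V Suc.hyps(2) by simp
  then obtain T ys where T: "tableau_on n T" and shape_T: "map length T = even_part_of (map length V)"
    and ys: "sorted_wrt (<) ys" "set ys \<subseteq> {1..n}" and V_eq: "insert_all T ys = V"
    using Suc.hyps(1) V by blast
  have "\<forall>j \<in> odd_rows V. j < new_box_row V x"
    using odd_V row Max_ge[OF fin] i_def by (auto simp: le_less)
  then have "\<forall>y \<in> set ys. y < x"
    using inserted_less_if_new_box_below_odd_rows[OF T _ ys] even_length_if_even_part[OF shape_T] V_eq
    by blast
  then have "sorted_wrt (<) (ys @ [x])" using ys(1) by (simp add: sorted_wrt_append)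
  moreover have "insert_all T (ys @ [x]) = U" using V_eq ins by (simp add: insert_all_snoc)
  ultimately show ?case using T shape_T shape ys(2) x by (intro exI[of _ T] exI[of _ "ys @ [x]"]) simp
qed

section \<open>The first row\<close>

lemma length_nth_le_insert_all: "i < length T \<Longrightarrow> length (T ! i) \<le> length (insert_all T xs ! i)"
proof (induction xs arbitrary: T)
  case (Cons x xs)
  have "i < length (tab_insert T x)" using Cons.prems by (simp add: length_tab_insert)
  then show ?case
    using Cons.IH[of "tab_insert T x"] length_tab_insert_nth[OF Cons.prems, of x]
    by (simp add: insert_all_Cons split: if_splits)
qed simp

lemma length_first_row_insert_all_grows:
  assumes "\<forall>z \<in> set r. x \<le> z"
  shows "Suc (length r) \<le> length (insert_all (r # rs) (x # xs) ! 0)"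
proof -
  have "tab_insert (r # rs) x = (r @ [x]) # rs"
    using bump_pos_eq_length[OF assms] by (simp add: tab_insert_Cons_eq)
  then show ?thesis using length_nth_le_insert_all[of 0 "(r @ [x]) # rs" xs] by (simp add: insert_all_Cons)
qed

lemma length_first_row_insert_all_keeps:
  assumes "r \<noteq> []" "sorted_wrt (<) xs" "\<forall>x \<in> set xs. last r < x"
  shows "length (insert_all (r # rs) xs ! 0) = length r"
  using assms
proof (induction xs arbitrary: r rs)
  case (Cons x xs)
  let ?k = "bump_pos r x"
  have last: "last r = r ! (length r - 1)" using Cons.prems(1) by (simp add: last_conv_nth)
  have k: "?k < length r"
  proof (rule ccontr)
    assume "\<not> ?k < length r"
    then have "length r - 1 < ?k" using Cons.prems(1) by (cases r) auto
    then have "x \<le> r ! (length r - 1)" by (rule le_nth_before_bump_pos)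
    then show False using Cons.prems(3) last by simp
  qed
  have "last (r[?k := x]) = x \<or> last (r[?k := x]) = last r"
    using Cons.prems(1) k last by (cases "?k = length r - 1") (auto simp: last_conv_nth)
  then have "\<forall>y \<in> set xs. last (r[?k := x]) < y" using Cons.prems(2,3) by auto
  then show ?case using Cons.IH[of "r[?k := x]"] Cons.prems(1,2) k
    by (simp add: insert_all_Cons tab_insert_Cons_eq)
qed simp

lemma last_le_sorted_ge: "sorted_wrt (\<ge>) r \<Longrightarrow> z \<in> set r \<Longrightarrow> last r \<le> (z :: 'a :: order)"
  by (induction r) (auto simp: last_in_set)

text \<open>This is where \<open>S(T)\<close> comes from: a first row of full length \<open>2m\<close> gains a box
  exactly when the smallest inserted entry does not exceed its last entry \<open>T\<^sub>1\<^sub>,\<^sub>2\<^sub>m\<close>.\<close>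
lemma length_first_row_insert_all_le_iff:
  assumes T: "tableau_on n T" and n: "0 < n" and xs: "sorted_wrt (<) xs" "set xs \<subseteq> {1..n}"
    and width: "length (T ! 0) \<le> 2 * m" and even: "even (length (T ! 0))"
  shows "length (insert_all T xs ! 0) \<le> 2 * m \<longleftrightarrow> set xs \<subseteq> S_set n m T"
proof -
  obtain r rs where T_eq: "T = r # rs" using T n by (cases T) (auto simp: tableau_on_def)
  have sorted: "sorted_wrt (\<ge>) r" using T T_eq by (simp add: tableau_on_def is_tableau_Cons)
  have upper: "length (insert_all T xs ! 0) \<le> Suc (length r)"
    using length_insert_all_nth[OF T xs n] T_eq by simp
  have grows: "2 * m < length (insert_all T xs ! 0)"
    if "length r = 2 * m" "xs \<noteq> []" "\<forall>z \<in> set r. hd xs \<le> z"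
    using that length_first_row_insert_all_grows[of r "hd xs" rs "tl xs"] T_eq by simp
  consider "m = 0" | "0 < m" "length r < 2 * m" | "0 < m" "length r = 2 * m"
    using width T_eq by fastforce
  then show ?thesis
  proof cases
    case 1
    then show ?thesis
      using grows width T_eq by (cases xs) (auto simp: S_set_def)
  next
    case 2
    then have "Suc (length r) \<le> 2 * m" using even T_eq by presburger
    then show ?thesis using 2 upper xs(2) T_eq by (simp add: S_set_def)
  next
    case 3
    then have "r \<noteq> []" by auto
    then have last: "T ! 0 ! (2 * m - 1) = last r" using T_eq 3(2) by (simp add: last_conv_nth)
    show ?thesis
    proof (cases "\<forall>x \<in> set xs. last r < x")
      case True
      then have "length (insert_all T xs ! 0) = 2 * m"
        using length_first_row_insert_all_keeps[OF \<open>r \<noteq> []\<close> xs(1)] 3 T_eq by simp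
      moreover have "set xs \<subseteq> {last r + 1..n}" using True xs(2) by force
      ultimately show ?thesis using 3 last T_eq by (simp add: S_set_def)
    next
      case False
      then obtain x where x: "x \<in> set xs" "x \<le> last r" by auto
      then have "hd xs \<le> x" using xs(1) by (cases xs) (auto simp: le_less)
      then have "\<forall>z \<in> set r. hd xs \<le> z" using x last_le_sorted_ge[OF sorted] by (meson order_trans)
      moreover have "xs \<noteq> []" using x by auto
      ultimately have "\<not> length (insert_all T xs ! 0) \<le> 2 * m" using grows 3 by simp
      moreover have "\<not> set xs \<subseteq> S_set n m T" using x 3 last T_eq by (auto simp: S_set_def)
      ultimately show ?thesis by simp
    qed
  qed
qed

section \<open>The map \<open>f\<close>\<close>

lemma is_partition_le_first: "is_partition n mu \<Longrightarrow> i < n \<Longrightarrow> mu ! i \<le> mu ! 0"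
proof (induction i)
  case (Suc i)
  then have "mu ! Suc i \<le> mu ! i" by (simp add: is_partition_def)
  then show ?case using Suc by simp
qed simp

lemma even_part_of_partition:
  assumes "is_partition n mu" "bounded_by mu k"
  shows "is_partition n (even_part_of mu)" "bounded_by (even_part_of mu) k"
    "even_partition (even_part_of mu)"
proof -
  have "2 * (mu ! Suc i div 2) \<le> 2 * (mu ! i div 2)" if "Suc i < n" for i
    using assms(1) that div_le_mono by (simp add: is_partition_def)
  then show "is_partition n (even_part_of mu)"
    using assms(1) by (simp add: is_partition_def even_part_of_def)
  have "2 * (mu ! i div 2) \<le> k" if "i < length mu" for i
    using assms(2) that unfolding bounded_by_def by (metis le_trans times_div_less_eq_dividend)
  then show "bounded_by (even_part_of mu) k" by (simp add: bounded_by_def even_part_of_def)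
  show "even_partition (even_part_of mu)" by (simp add: even_partition_def even_part_of_def)
qed

lemma PiE_01_eqI:
  assumes "t \<in> {1..n} \<rightarrow>\<^sub>E {0, 1}" "t' \<in> {1..n} \<rightarrow>\<^sub>E {0::nat, 1}" "ones n t = ones n t'"
  shows "t = t'"
proof
  fix i
  show "t i = t' i"
  proof (cases "i \<in> {1..n}")
    case True
    have "t i = 1 \<longleftrightarrow> t' i = 1" using assms(3) True unfolding ones_def by blast
    then show ?thesis using PiE_mem[OF assms(1) True] PiE_mem[OF assms(2) True] by auto
  next
    case False
    then show ?thesis using PiE_arb[OF assms(1) False] PiE_arb[OF assms(2) False] by simp
  qed
qed

lemma ones_restrict: "A \<subseteq> {1..n} \<Longrightarrow> ones n (\<lambda>i \<in> {1..n}. if i \<in> A then 1 else 0) = A"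
  by (auto simp: ones_def)

lemma f_map_eqI:
  assumes mu: "length mu = n" and lam: "lam = even_part_of mu"
    and T: "T \<in> SSYT lam n" and t: "t \<in> {1..n} \<rightarrow>\<^sub>E {0, 1}"
    and U: "U = insert_all T (sorted_list_of_set (ones n t))"
  shows "f_map n (U, mu) = ((T, lam), t)"
  unfolding f_map_def fst_conv snd_conv
proof (rule the_equality)
  fix r
  assume r: "case r of ((T', lam'), t') \<Rightarrow> lam' = even_part_of mu \<and> T' \<in> SSYT lam' n
      \<and> t' \<in> {1..n} \<rightarrow>\<^sub>E {0, 1} \<and> U = insert_all T' (sorted_list_of_set (ones n t'))"
  obtain T' t' where r_eq: "r = ((T', lam), t')" using r lam by (cases r) auto
  have T': "T' \<in> SSYT lam n" and t': "t' \<in> {1..n} \<rightarrow>\<^sub>E {0, 1}"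
    and U': "U = insert_all T' (sorted_list_of_set (ones n t'))" using r r_eq lam by auto
  have "length lam = n" using mu lam by (simp add: even_part_of_def)
  note tab = T[unfolded SSYT_iff_tableau_on[OF this]] T'[unfolded SSYT_iff_tableau_on[OF this]]
  have ones: "finite (ones n s)" "ones n s \<subseteq> {1..n}" for s by (auto simp: ones_def)
  have "T = T' \<and> sorted_list_of_set (ones n t) = sorted_list_of_set (ones n t')"
    using tab U U' ones by (intro insert_all_unique[of n]) auto
  then have "T = T'" "ones n t = ones n t'"
    using ones sorted_list_of_set_inject by blast+
  then show "r = ((T, lam), t)" using r_eq PiE_01_eqI[OF t t'] by simp
qed (use lam T t U in simp)

lemma even_part_of_shape_insert_all:
  assumes T: "tableau_on n T" "map length T = lam" "even_partition lam"
    and xs: "sorted_wrt (<) xs" "set xs \<subseteq> {1..n}"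
  shows "even_part_of (map length (insert_all T xs)) = lam"
proof (rule nth_equalityI)
  have len: "length T = n" "length (insert_all T xs) = n"
    using T(1) tableau_on_insert_all[OF T(1) xs(2)] by (simp_all add: tableau_on_def)
  then show "length (even_part_of (map length (insert_all T xs))) = length lam"
    using T(2) by (auto simp: even_part_of_def)
  fix i assume "i < length (even_part_of (map length (insert_all T xs)))"
  then have i: "i < n" using len by (simp add: even_part_of_def)
  have "length (T ! i) = lam ! i" using arg_cong[OF T(2), of "\<lambda>l. l ! i"] len i by simp
  moreover have "even (lam ! i)" using T(2,3) len i by (auto simp: even_partition_def)
  ultimately show "even_part_of (map length (insert_all T xs)) ! i = lam ! i"
    using length_insert_all_nth[OF T(1) xs i] len i by (auto simp: even_part_of_def elim!: evenE)
qed

definition admissible :: "nat \<Rightarrow> nat \<Rightarrow> ((nat list list \<times> nat list) \<times> (nat \<Rightarrow> nat)) set" where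
  "admissible n m = {((T, lam), t). (T, lam) \<in> even_tabs n m \<and> t \<in> {1..n} \<rightarrow>\<^sub>E {0, 1}
                       \<and> ones n t \<subseteq> S_set n m T}"

lemma f_map_admissible:
  assumes n: "0 < n" and U: "(U, mu) \<in> LHS_dom n m"
  shows "f_map n (U, mu) \<in> admissible n m"
proof -
  have mu: "is_partition n mu" "bounded_by mu (2 * m)" and U_SSYT: "U \<in> SSYT mu n"
    using U by (auto simp: LHS_dom_def)
  have len: "length mu = n" using mu(1) by (simp add: is_partition_def)
  have U_tab: "tableau_on n U" "map length U = mu" using U_SSYT SSYT_iff_tableau_on[OF len] by auto
  obtain T xs where T: "tableau_on n T" "map length T = even_part_of mu"
    and xs: "sorted_wrt (<) xs" "set xs \<subseteq> {1..n}" and U_eq: "insert_all T xs = U"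
    using exists_even_decomposition[OF U_tab(1)] U_tab(2) by blast
  define lam where "lam = even_part_of mu"
  define t where "t = (\<lambda>i \<in> {1..n}. if i \<in> set xs then 1 else 0 :: nat)"
  have t: "t \<in> {1..n} \<rightarrow>\<^sub>E {0, 1}" "ones n t = set xs"
    using ones_restrict[OF xs(2)] by (auto simp: t_def)
  have lam: "is_partition n lam" "bounded_by lam (2 * m)" "even_partition lam"
    using even_part_of_partition[OF mu] lam_def by auto
  have T_SSYT: "T \<in> SSYT lam n"
    using T SSYT_iff_tableau_on[of lam n] lam(1) lam_def by (simp add: is_partition_def)
  have "sorted_list_of_set (ones n t) = xs"
    using xs(1) t(2) by (simp add: sorted_list_of_set.idem_if_sorted_distinct strict_sorted_iff)
  then have "f_map n (U, mu) = ((T, lam), t)"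
    using f_map_eqI[OF len lam_def T_SSYT t(1)] U_eq by simp
  moreover have "ones n t \<subseteq> S_set n m T"
  proof -
    have "length T = n" using T(1) by (simp add: tableau_on_def)
    then have "length (T ! 0) = lam ! 0" using arg_cong[OF T(2), of "\<lambda>l. l ! 0"] lam_def n by simp
    then have width: "length (T ! 0) \<le> 2 * m" "even (length (T ! 0))"
      using lam n by (auto simp: bounded_by_def even_partition_def is_partition_def)
    have "mu ! 0 \<le> 2 * m" using mu(2) n len by (simp add: bounded_by_def)
    moreover have "length U = n" using U_tab(1) by (simp add: tableau_on_def)
    ultimately have "length (insert_all T xs ! 0) \<le> 2 * m"
      using arg_cong[OF U_tab(2), of "\<lambda>l. l ! 0"] U_eq n by simp
    then show ?thesis using length_first_row_insert_all_le_iff[OF T(1) n xs width] t(2) by simp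
  qed
  ultimately show ?thesis using lam T_SSYT t by (simp add: admissible_def even_tabs_def)
qed

lemma admissible_in_f_map_image:
  assumes n: "0 < n" and T: "(T, lam) \<in> even_tabs n m"
    and t: "t \<in> {1..n} \<rightarrow>\<^sub>E {0, 1}" "ones n t \<subseteq> S_set n m T"
  shows "((T, lam), t) \<in> f_map n ` LHS_dom n m"
proof -
  have lam: "is_partition n lam" "bounded_by lam (2 * m)" "even_partition lam"
    and T_SSYT: "T \<in> SSYT lam n" using T by (auto simp: even_tabs_def)
  have len_lam: "length lam = n" using lam(1) by (simp add: is_partition_def)
  have T_tab: "tableau_on n T" "map length T = lam" using T_SSYT SSYT_iff_tableau_on[OF len_lam] by auto
  define xs where "xs = sorted_list_of_set (ones n t)"
  have "finite (ones n t)" "ones n t \<subseteq> {1..n}" by (auto simp: ones_def)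
  then have xs: "sorted_wrt (<) xs" "set xs \<subseteq> {1..n}" and set_xs: "set xs = ones n t"
    by (simp_all add: xs_def)
  define U where "U = insert_all T xs"
  define mu where "mu = map length U"
  have U_tab: "tableau_on n U" unfolding U_def using tableau_on_insert_all[OF T_tab(1) xs(2)] .
  have len_mu: "length mu = n" using U_tab by (simp add: mu_def tableau_on_def)
  have "length (T ! 0) \<le> 2 * m" "even (length (T ! 0))"
    using arg_cong[OF T_tab(2), of "\<lambda>l. l ! 0"] T_tab(1) lam n len_lam
    by (auto simp: bounded_by_def even_partition_def tableau_on_def)
  then have "length (U ! 0) \<le> 2 * m"
    using length_first_row_insert_all_le_iff[OF T_tab(1) n xs] set_xs t(2) by (simp add: U_def)
  then have "bounded_by mu (2 * m)"
    using is_partition_le_first[OF is_partition_shape[OF U_tab]] len_mu U_tab n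
    by (auto simp: bounded_by_def mu_def tableau_on_def intro: le_trans)
  then have "(U, mu) \<in> LHS_dom n m"
    using is_partition_shape[OF U_tab] U_tab SSYT_iff_tableau_on[OF len_mu] by (simp add: LHS_dom_def mu_def)
  moreover have "f_map n (U, mu) = ((T, lam), t)"
    using f_map_eqI[OF len_mu _ T_SSYT t(1)] even_part_of_shape_insert_all[OF T_tab lam(3) xs]
    by (simp add: U_def xs_def mu_def)
  ultimately show ?thesis by (metis image_eqI)
qed

lemma f_map_image_LHS_dom: "0 < n \<Longrightarrow> f_map n ` LHS_dom n m = admissible n m"
  using f_map_admissible admissible_in_f_map_image by (fastforce simp: admissible_def)

lemma bij_betw_restrict_default:
  assumes "\<forall>a \<in> A. S a \<subseteq> I" "c \<in> B"
  shows "bij_betw (\<lambda>(a, t). (a, restrict t (S a)))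
           {(a, t). a \<in> A \<and> t \<in> I \<rightarrow>\<^sub>E B \<and> (\<forall>i \<in> I - S a. t i = c)}
           (SIGMA a:A. S a \<rightarrow>\<^sub>E B)"
    (is "bij_betw ?f ?D ?R")
proof (rule bij_betw_byWitness)
  let ?g = "\<lambda>(a, s). (a, \<lambda>i \<in> I. if i \<in> S a then s i else c)"
  show "\<forall>x \<in> ?D. ?g (?f x) = x"
  proof
    fix x assume "x \<in> ?D"
    then obtain a t where x: "x = (a, t)" "a \<in> A" "t \<in> I \<rightarrow>\<^sub>E B" "\<forall>i \<in> I - S a. t i = c"
      by blast
    have "(\<lambda>i \<in> I. if i \<in> S a then restrict t (S a) i else c) i = t i" for i
      using x(2,4) assms(1) PiE_arb[OF x(3), of i] by (cases "i \<in> I"; cases "i \<in> S a") auto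
    then show "?g (?f x) = x" using x(1) by auto
  qed
  show "\<forall>y \<in> ?R. ?f (?g y) = y"
  proof
    fix y assume "y \<in> ?R"
    then obtain a s where y: "y = (a, s)" "a \<in> A" "s \<in> S a \<rightarrow>\<^sub>E B" by blast
    have "restrict (\<lambda>i \<in> I. if i \<in> S a then s i else c) (S a) i = s i" for i
      using y(2) assms(1) PiE_arb[OF y(3), of i] by (cases "i \<in> S a") auto
    then show "?f (?g y) = y" using y(1) by auto
  qed
  show "?f ` ?D \<subseteq> ?R" using assms(1) by (fastforce simp: PiE_iff)
  show "?g ` ?R \<subseteq> ?D" using assms by auto
qed

lemma ones_subset_iff:
  assumes "t \<in> {1..n} \<rightarrow>\<^sub>E {0, 1}"
  shows "ones n t \<subseteq> S \<longleftrightarrow> (\<forall>i \<in> {1..n} - S. t i = (0::nat))"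
proof -
  have "t i = 0 \<longleftrightarrow> t i \<noteq> 1" if "i \<in> {1..n}" for i
    using PiE_mem[OF assms that] by auto
  then show ?thesis by (auto simp: ones_def)
qed

lemma bij_betw_admissible:
  "bij_betw (\<lambda>(a, t). (a, restrict t (S_set n m (fst a))))
     (admissible n m) (SIGMA a : even_tabs n m. S_set n m (fst a) \<rightarrow>\<^sub>E {0, 1})"
proof -
  have "admissible n m = {(a, t). a \<in> even_tabs n m \<and> t \<in> {1..n} \<rightarrow>\<^sub>E {0, 1}
                           \<and> (\<forall>i \<in> {1..n} - S_set n m (fst a). t i = 0)}"
    by (auto simp: admissible_def ones_subset_iff simp del: One_nat_def cong: conj_cong)
  then show ?thesis
    by (simp add: bij_betw_restrict_default S_set_def)
qed

theorem proposition3p16: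
  fixes n m :: nat
  assumes "n > 0"
  shows "f_map n ` LHS_dom n m =
           {((T, lam), t). (T, lam) \<in> even_tabs n m \<and> t \<in> {1..n} \<rightarrow>\<^sub>E {0, 1}
              \<and> ones n t \<subseteq> S_set n m T}
       \<and> (\<exists>g. bij_betw g
           {((T, lam), t). (T, lam) \<in> even_tabs n m \<and> t \<in> {1..n} \<rightarrow>\<^sub>E {0, 1}
              \<and> ones n t \<subseteq> S_set n m T}
           (SIGMA Tl : even_tabs n m. S_set n m (fst Tl) \<rightarrow>\<^sub>E {0::nat, 1}))"
  using f_map_image_LHS_dom[OF assms] bij_betw_admissible unfolding admissible_def by blast

end
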